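(* Let $h>0$, $N,s\in\mathbb{N}$ with $s\ge1$, $\mu>0$, $\alpha,\beta\in[0,1/2]$, and let $L:\mathbb{R}^d\times\mathbb{R}^d\to\mathbb{R}$ be $C^1$. Fix control points $0=d_0<d_1<\dots<d_s=1$, Lagrange polynomials $\ell_\nu$ of degree $s$ with $\ell_\nu(d_i)=\delta_{\nu i}$, and a quadrature rule $(b_i,c_i)_{i=1}^r$ with $c_i\in[0,1]$. For $(q^0,\dots,q^s)\in(\mathbb{R}^d)^{s+1}$ define the polynomial $q(\tau)=\sum_{\nu=0}^s q^\nu\ell_\nu(\tau)$ and the discrete Lagrangian $$L_d(q^0,\dots,q^s)=h\sum_{i=1}^r b_i\,L\Big(\sum_{\nu=0}^s q^\nu\ell_\nu(c_i),\ \tfrac1h\sum_{\nu=0}^s q^\nu\dot\ell_\nu(c_i)\Big).$$ Consider unknowns $x_k^\nu,y_k^\nu\in\mathbb{R}^d$, $k=0,\dots,N-1$, $\nu=0,\dots,s$, subject to $x_k^s=x_{k+1}^0$, $y_k^s=y_{k+1}^0$ ($k=0,\dots,N-2$), and write $x_k:=x_k^0$, $y_k:=y_k^0$ for $k\le N-1$, $x_N:=x_{N-1}^s$, $y_N:=y_{N-1}^s$. Let $\gamma=\rho/\sigma$ with $\rho_0/\sigma_0>0$ (e.g. the BDF function $\gamma_p(z)=\sum_{j=1}^p\frac1j(1-z)^j$), let $\omega_n^{(a)}$ be the Taylor coefficients of $(\gamma(z)/h)^{-a}$, and set $\mathcal{J}_{-}^{a}x_k=\sum_{n=0}^{k}\omega_n^{(a)}x_{k-n}$,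 $\mathcal{J}_{+}^{a}y_k=\sum_{n=0}^{N-k}\omega_n^{(a)}y_{k+n}$. Define the action $$\mathcal{S}_d=\sum_{k=0}^{N-1}\big(L_d(x_k^0,\dots,x_k^s)+L_d(y_k^0,\dots,y_k^s)\big)-\mu h\sum_{k=0}^{N}\mathcal{J}^{-\alpha}_{-}x_k\cdot\mathcal{J}^{-\beta}_{+}y_k .$$ Suppose the following hold, with $D_i$ the gradient of $L_d$ with respect to its $i$-th argument: (i) $D_{s+1}L_d(x_{k-1}^0,\dots,x_{k-1}^s)+D_1L_d(x_k^0,\dots,x_k^s)-\mu h\,\mathcal{J}^{-(\alpha+\beta)}_{-}x_k^0=0$ for $k=1,\dots,N-1$; (ii) $D_iL_d(x_k^0,\dots,x_k^s)=0$ for $k=0,\dots,N-1$, $i=2,\dots,s$; (iii) $D_{s+1}L_d(y_{k-1}^0,\dots,y_{k-1}^s)+D_1L_d(y_k^0,\dots,y_k^s)-\mu h\,\mathcal{J}^{-(\alpha+\beta)}_{+}y_k^0=0$ for $k=1,\dots,N-1$; (iv) $D_iL_d(y_k^0,\dots,y_k^s)=0$ for $k=0,\dots,N-1$, $i=2,\dots,s$. Then for every family of variations $\delta x_k^\nu\in\mathbb{R}^d$ compatible with the transition condition ($\delta x_k^s=\delta x_{k+1}^0$) and with $\delta x_0^0=0$, $\delta x_{N-1}^s=0$, the derivative at $\epsilon=0$ of $\epsilon\mapsto\mathcal{S}_d$ evaluated at $(x_k^\nu+\epsilon\delta x_k^\nu,\ y_k^\nu+\epsilon\delta x_k^\nu)$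 vanishes; i.e. (i)–(iv) are sufficient conditions for extremals of $\mathcal{S}_d$ under restricted variations.
   Context: This is the higher-order (Galerkin) fractional variational integrator: the conservative part uses polynomial interpolation of degree $s$ on each interval $[kh,(k+1)h]$ with a quadrature rule, while the fractional part uses convolution quadrature on the main nodes only. Restricted variations: the same variation is applied to the doubled variables $x$ and $y$. The continuous model being discretized is $\frac{d}{dt}\partial_{\dot x}L-\partial_xL=-\mu D_-^{\alpha+\beta}x$. *)

theory Defs
  imports "HOL-Analysis.Analysis" "HOL-Computational_Algebra.Polynomial"
begin

definition lagr :: "(nat \<Rightarrow> real) \<Rightarrow> nat \<Rightarrow> nat \<Rightarrow> real \<Rightarrow> real" where
  "lagr dp s nu t = (\<Prod>j\<in>{0..s} - {nu}. (t - dp j) / (dp nu - dp j))"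

definition Ld :: "((real^'d) \<times> (real^'d) \<Rightarrow> real) \<Rightarrow> real \<Rightarrow> (nat \<Rightarrow> real) \<Rightarrow> nat
    \<Rightarrow> nat \<Rightarrow> (nat \<Rightarrow> real) \<Rightarrow> (nat \<Rightarrow> real) \<Rightarrow> (nat \<Rightarrow> real^'d) \<Rightarrow> real" where
  "Ld L h dp s r b c q = h * (\<Sum>i=1..r. b i *
     L (\<Sum>nu=0..s. lagr dp s nu (c i) *\<^sub>R q nu,
        (1 / h) *\<^sub>R (\<Sum>nu=0..s. deriv (lagr dp s nu) (c i) *\<^sub>R q nu)))"

text \<open>Gradient of a function of (q 0, ..., q s) with respect to its argument number i
  (0-based: argument i is q i).\<close>
definition gradarg :: "((nat \<Rightarrow> real^'d) \<Rightarrow> real) \<Rightarrow> nat \<Rightarrow> (nat \<Rightarrow> real^'d) \<Rightarrow> real^'d" where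
  "gradarg F i q = (THE v. ((\<lambda>z. F (q(i := z))) has_derivative (\<lambda>w. v \<bullet> w)) (at (q i)))"

definition omega :: "real poly \<Rightarrow> real poly \<Rightarrow> real \<Rightarrow> real \<Rightarrow> nat \<Rightarrow> real" where
  "omega \<rho> \<sigma> h a n =
     (deriv ^^ n) (\<lambda>z. ((poly \<rho> z / poly \<sigma> z) / h) powr (- a)) 0 / fact n"

definition node :: "nat \<Rightarrow> nat \<Rightarrow> (nat \<Rightarrow> nat \<Rightarrow> real^'d) \<Rightarrow> nat \<Rightarrow> real^'d" where
  "node N s X k = (if k < N then X k 0 else X (N - 1) s)"

definition Jminus :: "(nat \<Rightarrow> real) \<Rightarrow> (nat \<Rightarrow> real^'d) \<Rightarrow> nat \<Rightarrow> real^'d" where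
  "Jminus w x k = (\<Sum>n=0..k. w n *\<^sub>R x (k - n))"

definition Jplus :: "nat \<Rightarrow> (nat \<Rightarrow> real) \<Rightarrow> (nat \<Rightarrow> real^'d) \<Rightarrow> nat \<Rightarrow> real^'d" where
  "Jplus N w y k = (\<Sum>n=0..N - k. w n *\<^sub>R y (k + n))"

definition action where
  "action L h dp s r b c \<rho> \<sigma> \<mu> \<alpha> \<beta> N X Y =
     (\<Sum>k=0..<N. Ld L h dp s r b c (X k) + Ld L h dp s r b c (Y k))
     - \<mu> * h * (\<Sum>k=0..N. Jminus (omega \<rho> \<sigma> h (-\<alpha>)) (node N s X) k
                          \<bullet> Jplus N (omega \<rho> \<sigma> h (-\<beta>)) (node N s Y) k)"

end

theory Submission
  imports Defs
begin

text \<open>With the same variation \<delta> applied to x and y, the derivative of the action splits into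
  a conservative part, the sum of the differentials of L_d at x_k and y_k in direction \<delta>_k, and
  a fractional part, bilinear in the node values. The operators J_- and J_+ are adjoint under the
  pairing \<Sum>_k (summation by parts), and the weights satisfy \<omega>^(a) * \<omega>^(b) = \<omega>^(a+b) as a
  Cauchy product, since (\<gamma>/h)^(-a) (\<gamma>/h)^(-b) = (\<gamma>/h)^(-(a+b)) near 0. Hence the fractional part
  equals \<mu> h \<Sum>_k (J_-^(-(\<alpha>+\<beta>)) x_k + J_+^(-(\<alpha>+\<beta>)) y_k) \<cdot> \<delta>_k. In the conservative part the
  interior gradients vanish by (ii) and (iv); pairing the end-point gradients of neighbouring
  intervals through the transition condition leaves exactly the left-hand sides of (i) and (iii),
  so both parts agree and the derivative is zero.\<close>

section \<open>Higher derivatives of real functions\<close>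

definition higher_differentiable_on :: "real set \<Rightarrow> nat \<Rightarrow> (real \<Rightarrow> real) \<Rightarrow> bool" where
  "higher_differentiable_on S n f \<longleftrightarrow> (\<forall>i\<le>n. \<forall>x\<in>S. (deriv ^^ i) f field_differentiable (at x))"

lemma higher_deriv_cong_open:
  assumes "open S" "\<And>x. x \<in> S \<Longrightarrow> f x = g x" "x \<in> S"
  shows "(deriv ^^ i) f x = (deriv ^^ i) g x"
proof (rule higher_deriv_cong_ev)
  show "\<forall>\<^sub>F x in nhds x. f x = g x"
    using eventually_nhds_in_open[OF assms(1,3)] by (rule eventually_mono) (use assms in auto)
qed auto

lemma higher_differentiable_on_cong:
  assumes "open S" "\<And>x. x \<in> S \<Longrightarrow> f x = g x" "higher_differentiable_on S n f"
  shows "higher_differentiable_on S n g"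
  unfolding higher_differentiable_on_def
proof (intro allI impI ballI)
  fix i x assume i: "i \<le> n" and x: "x \<in> S"
  from assms(3) i x obtain D where D: "((deriv ^^ i) f has_field_derivative D) (at x)"
    unfolding higher_differentiable_on_def field_differentiable_def by blast
  have "((deriv ^^ i) g has_field_derivative D) (at x)"
    by (rule has_field_derivative_transform_within_open[OF D assms(1) x])
       (rule higher_deriv_cong_open[OF assms(1,2)], auto)
  then show "(deriv ^^ i) g field_differentiable at x"
    unfolding field_differentiable_def by blast
qed

lemma higher_differentiable_on_Suc:
  "higher_differentiable_on S (Suc n) f \<longleftrightarrow>
     (\<forall>x\<in>S. f field_differentiable at x) \<and> higher_differentiable_on S n (deriv f)"
  unfolding higher_differentiable_on_def
proof safe
  fix i x assume "\<forall>i\<le>Suc n. \<forall>x\<in>S. (deriv ^^ i) f field_differentiable at x" "i \<le> n" "x \<in> S"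
  then show "(deriv ^^ i) (deriv f) field_differentiable at x"
    by (metis Suc_le_mono funpow_Suc_right o_apply)
next
  fix x assume "\<forall>i\<le>Suc n. \<forall>x\<in>S. (deriv ^^ i) f field_differentiable at x" "x \<in> S"
  then show "f field_differentiable at x" by (metis funpow_0 le0)
next
  fix i x assume "\<forall>x\<in>S. f field_differentiable at x"
    "\<forall>i\<le>n. \<forall>x\<in>S. (deriv ^^ i) (deriv f) field_differentiable at x" "i \<le> Suc n" "x \<in> S"
  then show "(deriv ^^ i) f field_differentiable at x"
    by (cases i) (auto simp del: funpow.simps simp: funpow_Suc_right)
qed

lemma higher_differentiable_on_mono:
  "higher_differentiable_on S n f \<Longrightarrow> m \<le> n \<Longrightarrow> higher_differentiable_on S m f"
  unfolding higher_differentiable_on_def by auto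

lemma higher_differentiable_on_add:
  assumes "open S"
  shows "higher_differentiable_on S n f \<Longrightarrow> higher_differentiable_on S n g \<Longrightarrow>
    higher_differentiable_on S n (\<lambda>x. f x + g x)"
proof (induction n arbitrary: f g)
  case 0 then show ?case
    unfolding higher_differentiable_on_def by (auto intro: field_differentiable_add)
next
  case (Suc n)
  then have f: "\<forall>x\<in>S. f field_differentiable at x" "higher_differentiable_on S n (deriv f)"
    and g: "\<forall>x\<in>S. g field_differentiable at x" "higher_differentiable_on S n (deriv g)"
    by (auto simp: higher_differentiable_on_Suc)
  have "higher_differentiable_on S n (\<lambda>x. deriv f x + deriv g x)" using Suc.IH f g by auto
  then have "higher_differentiable_on S n (deriv (\<lambda>x. f x + g x))"
    by (rule higher_differentiable_on_cong[OF assms, rotated]) (use f g in auto)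
  then show ?case using f g by (auto simp: higher_differentiable_on_Suc intro: field_differentiable_add)
qed

lemma higher_differentiable_on_mult:
  assumes "open S"
  shows "higher_differentiable_on S n f \<Longrightarrow> higher_differentiable_on S n g \<Longrightarrow>
    higher_differentiable_on S n (\<lambda>x. f x * g x)"
proof (induction n arbitrary: f g)
  case 0 then show ?case
    unfolding higher_differentiable_on_def by (auto intro: field_differentiable_mult)
next
  case (Suc n)
  then have f: "\<forall>x\<in>S. f field_differentiable at x" "higher_differentiable_on S n (deriv f)"
      "higher_differentiable_on S n f"
    and g: "\<forall>x\<in>S. g field_differentiable at x" "higher_differentiable_on S n (deriv g)"
      "higher_differentiable_on S n g"
    using higher_differentiable_on_mono[of S "Suc n"] by (auto simp: higher_differentiable_on_Suc)
  have "higher_differentiable_on S n (\<lambda>x. f x * deriv g x + deriv f x * g x)"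
    using Suc.IH f g by (auto intro!: higher_differentiable_on_add[OF assms])
  then have "higher_differentiable_on S n (deriv (\<lambda>x. f x * g x))"
    by (rule higher_differentiable_on_cong[OF assms, rotated]) (use f g in auto)
  then show ?case using f g by (auto simp: higher_differentiable_on_Suc intro: field_differentiable_mult)
qed

lemma higher_differentiable_on_const: "higher_differentiable_on S n (\<lambda>x. c)"
proof -
  have "(deriv ^^ i) (\<lambda>x. c) = (\<lambda>x. if i = 0 then c else 0)" for i
    by (induction i) auto
  then show ?thesis
    unfolding higher_differentiable_on_def by (auto simp: field_differentiable_const)
qed

lemma higher_differentiable_on_poly: "higher_differentiable_on S n (poly p)"
proof (induction n arbitrary: p)
  case 0 then show ?case unfolding higher_differentiable_on_def
    by (auto simp: field_differentiable_def intro: poly_DERIV)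
next
  case (Suc n)
  have "deriv (poly p) = poly (pderiv p)"
    by (rule ext, rule DERIV_imp_deriv, rule poly_DERIV)
  with Suc show ?case
    by (auto simp: higher_differentiable_on_Suc field_differentiable_def intro: poly_DERIV)
qed

lemma higher_differentiable_on_inverse:
  assumes S: "open S" and nz: "\<And>x. x \<in> S \<Longrightarrow> g x \<noteq> 0"
    and g: "\<And>m. higher_differentiable_on S m g"
  shows "higher_differentiable_on S n (\<lambda>x. inverse (g x))"
proof (induction n)
  case 0 then show ?case using nz g[of 0] unfolding higher_differentiable_on_def
    by (auto intro!: field_differentiable_inverse)
next
  case (Suc n)
  have dg: "\<forall>x\<in>S. g field_differentiable at x" "higher_differentiable_on S n (deriv g)"
    using g[of "Suc n"] higher_differentiable_on_Suc by auto
  have "higher_differentiable_on S n (\<lambda>x. (- 1 * deriv g x) * (inverse (g x) * inverse (g x)))"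
    by (intro higher_differentiable_on_mult[OF S] higher_differentiable_on_const dg Suc.IH)
  then have "higher_differentiable_on S n (deriv (\<lambda>x. inverse (g x)))"
    by (rule higher_differentiable_on_cong[OF S, rotated])
       (use dg nz in \<open>auto simp: power2_eq_square field_simps\<close>)
  then show ?case
    using dg nz by (auto simp: higher_differentiable_on_Suc intro: field_differentiable_inverse)
qed

lemma higher_differentiable_on_exp:
  assumes S: "open S" and u: "\<And>m. higher_differentiable_on S m u"
  shows "higher_differentiable_on S n (\<lambda>x. exp (u x))"
proof (induction n)
  case 0 then show ?case
    using u[of 0] unfolding higher_differentiable_on_def field_differentiable_def
    by (auto intro!: derivative_eq_intros)
next
  case (Suc n)
  have du: "\<forall>x\<in>S. u field_differentiable at x" "higher_differentiable_on S n (deriv u)"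
    using u[of "Suc n"] higher_differentiable_on_Suc by auto
  have D: "((\<lambda>x. exp (u x)) has_field_derivative exp (u x) * deriv u x) (at x)" if "x \<in> S" for x
    using du(1) that
    by (auto intro!: derivative_eq_intros simp: DERIV_deriv_iff_field_differentiable[symmetric])
  have "higher_differentiable_on S n (\<lambda>x. exp (u x) * deriv u x)"
    by (intro higher_differentiable_on_mult[OF S] du Suc.IH)
  then have "higher_differentiable_on S n (deriv (\<lambda>x. exp (u x)))"
    by (rule higher_differentiable_on_cong[OF S, rotated])
       (use D in \<open>auto intro: DERIV_imp_deriv[symmetric]\<close>)
  then show ?case using D by (auto simp: higher_differentiable_on_Suc field_differentiable_def)
qed

lemma higher_differentiable_on_ln:
  assumes S: "open S" and pos: "\<And>x. x \<in> S \<Longrightarrow> u x > 0"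
    and u: "\<And>m. higher_differentiable_on S m u"
  shows "higher_differentiable_on S n (\<lambda>x. ln (u x))"
proof (cases n)
  case 0
  have "(\<lambda>x. ln (u x)) field_differentiable at x" if "x \<in> S" for x
    using pos[OF that] u[of 0] that unfolding higher_differentiable_on_def field_differentiable_def
    by (auto intro!: derivative_eq_intros)
  then show ?thesis using 0 unfolding higher_differentiable_on_def by auto
next
  case (Suc n)
  have du: "\<forall>x\<in>S. u field_differentiable at x" "higher_differentiable_on S n (deriv u)"
    using u[of "Suc n"] higher_differentiable_on_Suc by auto
  have D: "((\<lambda>x. ln (u x)) has_field_derivative deriv u x * inverse (u x)) (at x)" if "x \<in> S" for x
    using du(1) pos[OF that] that
    by (auto intro!: derivative_eq_intros
        simp: field_simps DERIV_deriv_iff_field_differentiable[symmetric])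
  have "higher_differentiable_on S n (\<lambda>x. deriv u x * inverse (u x))"
    by (intro higher_differentiable_on_mult[OF S] du higher_differentiable_on_inverse S u)
       (use pos in force)
  then have "higher_differentiable_on S n (deriv (\<lambda>x. ln (u x)))"
    by (rule higher_differentiable_on_cong[OF S, rotated])
       (use D in \<open>auto intro: DERIV_imp_deriv[symmetric]\<close>)
  then show ?thesis using D Suc by (auto simp: higher_differentiable_on_Suc field_differentiable_def)
qed

lemma sum_binomial_Suc:
  fixes a b :: "nat \<Rightarrow> 'a::comm_semiring_1"
  shows "(\<Sum>i=0..Suc n. of_nat (Suc n choose i) * a i * b (Suc n - i)) =
    (\<Sum>i=0..n. of_nat (n choose i) * (a (Suc i) * b (n - i) + a i * b (Suc (n - i))))"
proof -
  have pascal: "(of_nat (Suc n choose i) :: 'a) =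
      of_nat (n choose i) + (if i = 0 then 0 else of_nat (n choose (i - 1)))" for i
    by (cases i) (simp_all add: add.commute)
  have "(\<Sum>i=0..Suc n. of_nat (Suc n choose i) * a i * b (Suc n - i)) =
      (\<Sum>i=0..Suc n. of_nat (n choose i) * a i * b (Suc n - i))
      + (\<Sum>i=Suc 0..Suc n. of_nat (n choose (i - 1)) * a i * b (Suc n - i))"
    unfolding pascal by (simp add: sum.distrib distrib_right sum.atLeast_Suc_atMost)
  also have "(\<Sum>i=0..Suc n. of_nat (n choose i) * a i * b (Suc n - i))
      = (\<Sum>i=0..n. of_nat (n choose i) * a i * b (Suc (n - i)))"
    by (simp add: Suc_diff_le binomial_eq_0)
  also have "(\<Sum>i=Suc 0..Suc n. of_nat (n choose (i - 1)) * a i * b (Suc n - i))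
      = (\<Sum>i=0..n. of_nat (n choose i) * a (Suc i) * b (n - i))"
    by (simp only: sum.shift_bounds_cl_Suc_ivl) simp
  finally show ?thesis by (simp add: sum.distrib algebra_simps)
qed

text \<open>Real-variable counterpart of the Leibniz rule \<open>higher_deriv_mult\<close>, which the library
  states for holomorphic functions only.\<close>

lemma higher_deriv_mult_real:
  fixes f g :: "real \<Rightarrow> real"
  assumes S: "open S" and f: "\<And>m. higher_differentiable_on S m f"
    and g: "\<And>m. higher_differentiable_on S m g" and z: "z \<in> S"
  shows "(deriv ^^ n) (\<lambda>w. f w * g w) z =
           (\<Sum>i=0..n. of_nat (n choose i) * (deriv ^^ i) f z * (deriv ^^ (n - i)) g z)"
  using z
proof (induction n arbitrary: z)
  case 0 then show ?case by simp
next
  case (Suc n z)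
  have Df: "((deriv ^^ i) f has_field_derivative (deriv ^^ Suc i) f w) (at w)"
    and Dg: "((deriv ^^ i) g has_field_derivative (deriv ^^ Suc i) g w) (at w)" if "w \<in> S" for i w
    using f[of i] g[of i] that
    by (auto simp: higher_differentiable_on_def DERIV_deriv_iff_field_differentiable)
  define P where "P w = (\<Sum>i=0..n. of_nat (n choose i) * (deriv ^^ i) f w * (deriv ^^ (n - i)) g w)"
    for w
  have "(P has_field_derivative
      (\<Sum>i=0..n. of_nat (n choose i) * ((deriv ^^ Suc i) f z * (deriv ^^ (n - i)) g z
                                     + (deriv ^^ i) f z * (deriv ^^ Suc (n - i)) g z))) (at z)"
    unfolding P_def
    by (rule derivative_eq_intros Df Dg Suc.prems refl | simp add: algebra_simps)+
  also have "(\<Sum>i=0..n. of_nat (n choose i) * ((deriv ^^ Suc i) f z * (deriv ^^ (n - i)) g z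
                                     + (deriv ^^ i) f z * (deriv ^^ Suc (n - i)) g z))
      = (\<Sum>i=0..Suc n. of_nat (Suc n choose i) * (deriv ^^ i) f z * (deriv ^^ (Suc n - i)) g z)"
    by (rule sum_binomial_Suc[symmetric])
  finally have "((deriv ^^ n) (\<lambda>w. f w * g w) has_field_derivative \<dots>) (at z)"
    by (rule has_field_derivative_transform_within_open[OF _ S Suc.prems])
       (use Suc.IH in \<open>simp add: P_def\<close>)
  then show ?case unfolding funpow.simps(2) o_apply by (rule DERIV_imp_deriv)
qed

section \<open>Convolution of the weights\<close>

definition seq_conv :: "(nat \<Rightarrow> real) \<Rightarrow> (nat \<Rightarrow> real) \<Rightarrow> nat \<Rightarrow> real" where
  "seq_conv v w n = (\<Sum>i=0..n. v i * w (n - i))"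

lemma omega_add:
  assumes h: "h > 0" and sigma0: "coeff \<sigma> 0 \<noteq> 0" and gamma0: "coeff \<rho> 0 / coeff \<sigma> 0 > 0"
  shows "seq_conv (omega \<rho> \<sigma> h a) (omega \<rho> \<sigma> h b) = omega \<rho> \<sigma> h (a + b)"
proof
  fix n
  define G where "G z = poly \<rho> z / poly \<sigma> z / h" for z
  define S where "S = {z. poly \<sigma> z \<noteq> 0} \<inter> G -` {0<..}"
  have "continuous_on {z. poly \<sigma> z \<noteq> 0} G"
    unfolding G_def using h by (intro continuous_intros) auto
  then have S: "open S"
    unfolding S_def by (intro continuous_open_preimage open_Collect_neq continuous_intros) auto
  have "G 0 > 0"
    unfolding G_def poly_0_coeff_0 using h gamma0 by (rule divide_pos_pos[rotated])
  then have S0: "0 \<in> S" using sigma0 by (simp add: S_def poly_0_coeff_0)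
  have G_pos: "G z > 0" and \<sigma>_nz: "poly \<sigma> z \<noteq> 0" if "z \<in> S" for z
    using that by (auto simp: S_def)
  have G_smooth: "higher_differentiable_on S m G" for m
  proof -
    have "higher_differentiable_on S m (\<lambda>z. poly \<rho> z * inverse (poly \<sigma> z) * inverse h)"
      by (intro higher_differentiable_on_mult[OF S] higher_differentiable_on_poly
          higher_differentiable_on_inverse[OF S] higher_differentiable_on_const \<sigma>_nz)
    then show ?thesis
      by (rule higher_differentiable_on_cong[OF S, rotated]) (simp add: G_def field_simps)
  qed
  have powr_smooth: "higher_differentiable_on S m (\<lambda>z. G z powr c)" for m c
  proof -
    have "higher_differentiable_on S m (\<lambda>z. exp (c * ln (G z)))"
      by (intro higher_differentiable_on_exp[OF S] higher_differentiable_on_mult[OF S]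
          higher_differentiable_on_const higher_differentiable_on_ln[OF S] G_smooth G_pos)
    then show ?thesis
      by (rule higher_differentiable_on_cong[OF S, rotated]) (use G_pos in \<open>force simp: powr_def\<close>)
  qed
  have "(deriv ^^ n) (\<lambda>z. G z powr (- (a + b))) 0 = (deriv ^^ n) (\<lambda>z. G z powr - a * G z powr - b) 0"
    by (rule higher_deriv_cong_open[OF S _ S0]) (use G_pos in \<open>simp add: powr_add[symmetric]\<close>)
  also have "\<dots> = (\<Sum>i=0..n. of_nat (n choose i) * (deriv ^^ i) (\<lambda>z. G z powr - a) 0
                                   * (deriv ^^ (n - i)) (\<lambda>z. G z powr - b) 0)"
    by (rule higher_deriv_mult_real[OF S powr_smooth powr_smooth S0])
  finally have Leibniz: "omega \<rho> \<sigma> h (a + b) n = (\<Sum>i=0..n. of_nat (n choose i)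
      * (deriv ^^ i) (\<lambda>z. G z powr - a) 0 * (deriv ^^ (n - i)) (\<lambda>z. G z powr - b) 0) / fact n"
    unfolding omega_def G_def by simp
  show "seq_conv (omega \<rho> \<sigma> h a) (omega \<rho> \<sigma> h b) n = omega \<rho> \<sigma> h (a + b) n"
    unfolding Leibniz seq_conv_def unfolding omega_def G_def[symmetric] sum_divide_distrib
    by (rule sum.cong) (auto simp: binomial_fact field_simps)
qed

section \<open>The discrete fractional operators\<close>

lemma sum_triangle_diagonals:
  fixes f :: "nat \<Rightarrow> nat \<Rightarrow> 'a::comm_monoid_add"
  shows "(\<Sum>n=0..M. \<Sum>p=0..M-n. f n p) = (\<Sum>q=0..M. \<Sum>n=0..q. f n (q - n))"
proof -
  have "(\<Sum>q=0..M. \<Sum>n=0..q. f n (q - n)) = (\<Sum>(n, p)\<in>{(n, p). n + p \<le> M}. f n p)"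
    using sum.triangle_reindex_eq[of f M] by (simp add: atMost_atLeast0)
  also have "{(n, p). n + p \<le> M} = Sigma {0..M} (\<lambda>n. {0..M-n})" by auto
  finally show ?thesis by (simp add: sum.Sigma)
qed

lemma sum_triangle_swap:
  fixes f :: "nat \<Rightarrow> nat \<Rightarrow> 'a::comm_monoid_add"
  shows "(\<Sum>n=0..M. \<Sum>p=0..M-n. f n p) = (\<Sum>p=0..M. \<Sum>n=0..M-p. f n p)"
proof -
  have "(\<Sum>n=0..M. \<Sum>p=0..M-n. f n p) = (\<Sum>n=0..M. \<Sum>p\<in>{p. p \<in> {0..M} \<and> n + p \<le> M}. f n p)"
    by (intro sum.cong) auto
  also have "\<dots> = (\<Sum>p=0..M. \<Sum>n\<in>{n. n \<in> {0..M} \<and> n + p \<le> M}. f n p)"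
    by (rule sum.swap_restrict) auto
  also have "\<dots> = (\<Sum>p=0..M. \<Sum>n=0..M-p. f n p)"
    by (intro sum.cong) auto
  finally show ?thesis .
qed

lemma sum_Jminus_inner:
  "(\<Sum>k=0..N. Jminus w a k \<bullet> b k) = (\<Sum>k=0..N. a k \<bullet> Jplus N w b k)"
proof -
  have "(\<Sum>k=0..N. Jminus w a k \<bullet> b k) = (\<Sum>k=0..N. \<Sum>n=0..k. (w n *\<^sub>R a (k - n)) \<bullet> b (n + (k - n)))"
    unfolding Jminus_def inner_sum_left by (intro sum.cong refl) auto
  also have "\<dots> = (\<Sum>n=0..N. \<Sum>p=0..N-n. (w n *\<^sub>R a p) \<bullet> b (n + p))"
    by (rule sum_triangle_diagonals[symmetric])
  also have "\<dots> = (\<Sum>p=0..N. \<Sum>n=0..N-p. (w n *\<^sub>R a p) \<bullet> b (n + p))"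
    by (rule sum_triangle_swap)
  also have "\<dots> = (\<Sum>k=0..N. a k \<bullet> Jplus N w b k)"
    unfolding Jplus_def inner_sum_right by (intro sum.cong refl) (simp add: algebra_simps)
  finally show ?thesis .
qed

lemma Jminus_Jminus: "Jminus v (Jminus w x) k = Jminus (seq_conv v w) x k"
proof -
  have "Jminus v (Jminus w x) k = (\<Sum>n=0..k. \<Sum>p=0..k-n. (v n * w p) *\<^sub>R x (k - (n + p)))"
    unfolding Jminus_def scaleR_sum_right by (intro sum.cong refl) (auto simp: diff_diff_add)
  also have "\<dots> = (\<Sum>q=0..k. \<Sum>n=0..q. (v n * w (q - n)) *\<^sub>R x (k - q))"
    by (subst sum_triangle_diagonals) (intro sum.cong refl, auto)
  finally show ?thesis
    unfolding Jminus_def seq_conv_def scaleR_sum_left .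
qed

lemma Jplus_Jplus:
  assumes "k \<le> N"
  shows "Jplus N v (Jplus N w y) k = Jplus N (seq_conv v w) y k"
proof -
  have "Jplus N v (Jplus N w y) k = (\<Sum>n=0..N-k. \<Sum>p=0..(N-k)-n. (v n * w p) *\<^sub>R y (k + (n + p)))"
    unfolding Jplus_def scaleR_sum_right by (intro sum.cong refl) (auto simp: algebra_simps)
  also have "\<dots> = (\<Sum>q=0..N-k. \<Sum>n=0..q. (v n * w (q - n)) *\<^sub>R y (k + q))"
    by (subst sum_triangle_diagonals) (intro sum.cong refl, auto)
  finally show ?thesis
    unfolding Jplus_def seq_conv_def scaleR_sum_left .
qed

lemma sum_Jminus_inner_Jplus_eq_Jplus:
  "(\<Sum>k=0..N. Jminus v a k \<bullet> Jplus N w b k) = (\<Sum>k=0..N. a k \<bullet> Jplus N (seq_conv v w) b k)"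
  unfolding sum_Jminus_inner by (intro sum.cong refl) (simp add: Jplus_Jplus)

lemma sum_Jminus_inner_Jplus_eq_Jminus:
  "(\<Sum>k=0..N. Jminus v a k \<bullet> Jplus N w b k) = (\<Sum>k=0..N. Jminus (seq_conv w v) a k \<bullet> b k)"
  unfolding sum_Jminus_inner[symmetric] by (simp add: Jminus_Jminus)

lemma sum_fractional_pairing_variation:
  fixes u x y :: "nat \<Rightarrow> real^'d"
  assumes h: "h > 0" and sigma0: "coeff \<sigma> 0 \<noteq> 0" and gamma0: "coeff \<rho> 0 / coeff \<sigma> 0 > 0"
  shows "(\<Sum>k=0..N. Jminus (omega \<rho> \<sigma> h (- \<alpha>)) u k \<bullet> Jplus N (omega \<rho> \<sigma> h (- \<beta>)) y k
                  + Jminus (omega \<rho> \<sigma> h (- \<alpha>)) x k \<bullet> Jplus N (omega \<rho> \<sigma> h (- \<beta>)) u k)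
    = (\<Sum>k=0..N. (Jminus (omega \<rho> \<sigma> h (- (\<alpha> + \<beta>))) x k
                  + Jplus N (omega \<rho> \<sigma> h (- (\<alpha> + \<beta>))) y k) \<bullet> u k)"
proof -
  have "seq_conv (omega \<rho> \<sigma> h (- \<alpha>)) (omega \<rho> \<sigma> h (- \<beta>)) = omega \<rho> \<sigma> h (- (\<alpha> + \<beta>))"
    and "seq_conv (omega \<rho> \<sigma> h (- \<beta>)) (omega \<rho> \<sigma> h (- \<alpha>)) = omega \<rho> \<sigma> h (- (\<alpha> + \<beta>))"
    using omega_add[OF h sigma0 gamma0, of "- \<alpha>" "- \<beta>"] omega_add[OF h sigma0 gamma0, of "- \<beta>" "- \<alpha>"]
    by (simp_all add: add.commute)
  then show ?thesis
    unfolding sum.distrib sum_Jminus_inner_Jplus_eq_Jplus[of _ u] sum_Jminus_inner_Jplus_eq_Jminus[of _ x]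
    by (simp add: inner_add_left inner_add_right sum.distrib inner_commute add.commute)
qed

lemma Jminus_add_scaleR:
  "Jminus w (\<lambda>k. a k + t *\<^sub>R a' k) k = Jminus w a k + t *\<^sub>R Jminus w a' k"
  by (simp add: Jminus_def sum.distrib scaleR_sum_right scaleR_add_right ac_simps)

lemma Jplus_add_scaleR:
  "Jplus N w (\<lambda>k. a k + t *\<^sub>R a' k) k = Jplus N w a k + t *\<^sub>R Jplus N w a' k"
  by (simp add: Jplus_def sum.distrib scaleR_sum_right scaleR_add_right ac_simps)

lemma node_add_scaleR:
  "node N s (\<lambda>k \<nu>. X k \<nu> + t *\<^sub>R \<delta> k \<nu>) = (\<lambda>k. node N s X k + t *\<^sub>R node N s \<delta> k)"
  by (simp add: node_def fun_eq_iff)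

section \<open>The differential of the discrete Lagrangian\<close>

lemma inner_the_gradient:
  fixes F :: "'a::euclidean_space \<Rightarrow> real"
  assumes F: "(F has_derivative D) (at x)"
  shows "(THE v. (F has_derivative (\<lambda>w. v \<bullet> w)) (at x)) \<bullet> w = D w"
proof -
  define g where "g = adjoint D 1"
  have "D w = g \<bullet> w" for w
    using adjoint_works[OF has_derivative_linear[OF F], of w 1] by (simp add: g_def inner_commute)
  then have D_eq: "D = (\<lambda>w. g \<bullet> w)" ..
  have "(THE v. (F has_derivative (\<lambda>w. v \<bullet> w)) (at x)) = g"
  proof (rule the_equality)
    show "(F has_derivative (\<lambda>w. g \<bullet> w)) (at x)" using F by (simp add: D_eq)
  next
    fix v assume "(F has_derivative (\<lambda>w. v \<bullet> w)) (at x)"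
    from has_derivative_unique[OF this F] have "\<forall>z. v \<bullet> z = g \<bullet> z"
      by (simp add: D_eq fun_eq_iff)
    then show "v = g" by (simp add: vector_eq_rdot)
  qed
  then show ?thesis by (simp add: D_eq)
qed

definition Ld_point :: "real \<Rightarrow> (nat \<Rightarrow> real) \<Rightarrow> nat \<Rightarrow> (nat \<Rightarrow> real) \<Rightarrow> (nat \<Rightarrow> real^'d) \<Rightarrow> nat
    \<Rightarrow> (real^'d) \<times> (real^'d)" where
  "Ld_point h dp s c q i = (\<Sum>\<nu>=0..s. lagr dp s \<nu> (c i) *\<^sub>R q \<nu>,
     (1 / h) *\<^sub>R (\<Sum>\<nu>=0..s. deriv (lagr dp s \<nu>) (c i) *\<^sub>R q \<nu>))"

definition Ld_differential :: "((real^'d) \<times> (real^'d) \<Rightarrow> ((real^'d) \<times> (real^'d)) \<Rightarrow>\<^sub>L real)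
    \<Rightarrow> real \<Rightarrow> (nat \<Rightarrow> real) \<Rightarrow> nat \<Rightarrow> nat \<Rightarrow> (nat \<Rightarrow> real) \<Rightarrow> (nat \<Rightarrow> real)
    \<Rightarrow> (nat \<Rightarrow> real^'d) \<Rightarrow> (nat \<Rightarrow> real^'d) \<Rightarrow> real" where
  "Ld_differential L' h dp s r b c q \<delta> =
     h * (\<Sum>i=1..r. b i * L' (Ld_point h dp s c q i) (Ld_point h dp s c \<delta> i))"

lemma Ld_eq_Ld_point: "Ld L h dp s r b c q = h * (\<Sum>i=1..r. b i * L (Ld_point h dp s c q i))"
  unfolding Ld_def Ld_point_def ..

lemma Ld_point_scaleR: "Ld_point h dp s c (\<lambda>\<nu>. t *\<^sub>R \<delta> \<nu>) i = t *\<^sub>R Ld_point h dp s c \<delta> i"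
  unfolding Ld_point_def by (simp add: scaleR_sum_right ac_simps)

lemma Ld_point_eq_sum:
  "Ld_point h dp s c \<delta> i = (\<Sum>\<nu>=0..s. Ld_point h dp s c (\<lambda>j. if j = \<nu> then \<delta> \<nu> else 0) i)"
proof -
  have "Ld_point h dp s c (\<lambda>j. if j = \<nu> then \<delta> \<nu> else 0) i =
      (lagr dp s \<nu> (c i) *\<^sub>R \<delta> \<nu>, (1 / h) *\<^sub>R (deriv (lagr dp s \<nu>) (c i) *\<^sub>R \<delta> \<nu>))"
    if "\<nu> \<in> {0..s}" for \<nu>
    using that by (simp add: Ld_point_def if_distrib cong: if_cong)
  then show ?thesis
    by (simp add: prod_eq_iff fst_sum snd_sum Ld_point_def scaleR_sum_right)
qed

lemma has_derivative_Ld: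
  fixes g :: "'a::real_normed_vector \<Rightarrow> nat \<Rightarrow> real^'d"
  assumes L_deriv: "\<And>p. (L has_derivative blinfun_apply (L' p)) (at p)"
    and g: "\<And>\<nu>. ((\<lambda>z. g z \<nu>) has_derivative g' \<nu>) (at x)"
  shows "((\<lambda>z. Ld L h dp s r b c (g z)) has_derivative
           (\<lambda>w. Ld_differential L' h dp s r b c (g x) (\<lambda>\<nu>. g' \<nu> w))) (at x)"
proof -
  have "((\<lambda>z. Ld_point h dp s c (g z) i) has_derivative (\<lambda>w. Ld_point h dp s c (\<lambda>\<nu>. g' \<nu> w) i)) (at x)"
    for i
    unfolding Ld_point_def by (intro has_derivative_Pair has_derivative_scaleR_right has_derivative_sum g)
  from has_derivative_compose[OF this L_deriv] show ?thesis
    unfolding Ld_eq_Ld_point Ld_differential_def by (intro has_derivative_mult_right has_derivative_sum)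
qed

lemma has_real_derivative_Ld_line:
  assumes L_deriv: "\<And>p. (L has_derivative blinfun_apply (L' p)) (at p)"
  shows "((\<lambda>t. Ld L h dp s r b c (\<lambda>\<nu>. q \<nu> + t *\<^sub>R \<delta> \<nu>)) has_real_derivative
           Ld_differential L' h dp s r b c q \<delta>) (at 0)"
proof -
  have "((\<lambda>t. Ld L h dp s r b c (\<lambda>\<nu>. q \<nu> + t *\<^sub>R \<delta> \<nu>)) has_derivative
      (\<lambda>t. Ld_differential L' h dp s r b c (\<lambda>\<nu>. q \<nu> + 0 *\<^sub>R \<delta> \<nu>) (\<lambda>\<nu>. t *\<^sub>R \<delta> \<nu>))) (at 0)"
    by (rule has_derivative_Ld[OF L_deriv]) (auto intro!: derivative_eq_intros)
  moreover have "Ld_differential L' h dp s r b c (\<lambda>\<nu>. q \<nu> + 0 *\<^sub>R \<delta> \<nu>) (\<lambda>\<nu>. t *\<^sub>R \<delta> \<nu>)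
      = Ld_differential L' h dp s r b c q \<delta> * t" for t
    unfolding Ld_differential_def Ld_point_scaleR
    by (simp add: blinfun.scaleR_right sum_distrib_left algebra_simps)
  ultimately show ?thesis
    unfolding has_field_derivative_def by simp
qed

lemma inner_gradarg_Ld:
  assumes L_deriv: "\<And>p. (L has_derivative blinfun_apply (L' p)) (at p)"
  shows "gradarg (Ld L h dp s r b c) \<nu> q \<bullet> w =
           Ld_differential L' h dp s r b c q (\<lambda>j. if j = \<nu> then w else 0)"
proof -
  have "((\<lambda>z. (q(\<nu> := z)) j) has_derivative (\<lambda>w. if j = \<nu> then w else 0)) (at (q \<nu>))" for j
    by (cases "j = \<nu>") (auto intro: derivative_eq_intros)
  from has_derivative_Ld[where g="\<lambda>z. q(\<nu> := z)" and x="q \<nu>", OF L_deriv this]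
  have "((\<lambda>z. Ld L h dp s r b c (q(\<nu> := z))) has_derivative
      (\<lambda>w. Ld_differential L' h dp s r b c q (\<lambda>j. if j = \<nu> then w else 0))) (at (q \<nu>))"
    by simp
  then show ?thesis
    unfolding gradarg_def by (rule inner_the_gradient)
qed

lemma Ld_differential_eq_sum_gradarg:
  assumes L_deriv: "\<And>p. (L has_derivative blinfun_apply (L' p)) (at p)"
  shows "Ld_differential L' h dp s r b c q \<delta> = (\<Sum>\<nu>=0..s. gradarg (Ld L h dp s r b c) \<nu> q \<bullet> \<delta> \<nu>)"
  unfolding inner_gradarg_Ld[OF L_deriv] Ld_differential_def
  by (subst Ld_point_eq_sum[of h dp s c \<delta>])
     (simp add: blinfun.sum_right sum_distrib_left, rule sum.swap)

section \<open>Variation of the action\<close>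

lemma sum_boundary_pairing:
  fixes a e :: "nat \<Rightarrow> real^'d" and \<delta> :: "nat \<Rightarrow> nat \<Rightarrow> real^'d"
  assumes N: "N \<ge> 1" and transition: "\<And>k. k + 2 \<le> N \<Longrightarrow> \<delta> k s = \<delta> (k + 1) 0"
    and first: "\<delta> 0 0 = 0" and last: "\<delta> (N - 1) s = 0"
  shows "(\<Sum>k<N. a k \<bullet> \<delta> k 0 + e k \<bullet> \<delta> k s) = (\<Sum>k=1..<N. (e (k - 1) + a k) \<bullet> node N s \<delta> k)"
proof -
  obtain M where M: "N = Suc M" using N by (cases N) auto
  have "(\<Sum>k<N. a k \<bullet> \<delta> k 0) = (\<Sum>k=1..<N. a k \<bullet> node N s \<delta> k)"
    by (simp add: M lessThan_Suc_atMost atMost_atLeast0 sum.atLeast_Suc_atMost first node_def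
        atLeastLessThanSuc_atLeastAtMost)
  moreover have "(\<Sum>k<N. e k \<bullet> \<delta> k s) = (\<Sum>k=1..<N. e (k - 1) \<bullet> node N s \<delta> k)"
  proof -
    have "(\<Sum>k<N. e k \<bullet> \<delta> k s) = (\<Sum>k=Suc 0..Suc M. e (k - 1) \<bullet> \<delta> (k - 1) s)"
      unfolding sum.shift_bounds_cl_Suc_ivl by (simp add: M lessThan_Suc_atMost atMost_atLeast0)
    also have "\<dots> = (\<Sum>k=1..<N. e (k - 1) \<bullet> \<delta> (k - 1) s)"
      using last by (simp add: M atLeastLessThanSuc_atLeastAtMost sum.cl_ivl_Suc)
    also have "\<dots> = (\<Sum>k=1..<N. e (k - 1) \<bullet> node N s \<delta> k)"
      using transition[of "k - 1" for k] by (intro sum.cong refl) (auto simp: node_def)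
    finally show ?thesis .
  qed
  ultimately show ?thesis
    by (simp add: sum.distrib inner_add_left)
qed

lemma sum_node_interior:
  fixes V :: "nat \<Rightarrow> real^'d" and \<delta> :: "nat \<Rightarrow> nat \<Rightarrow> real^'d"
  assumes N: "N \<ge> 1" and first: "\<delta> 0 0 = 0" and last: "\<delta> (N - 1) s = 0"
  shows "(\<Sum>k=0..N. V k \<bullet> node N s \<delta> k) = (\<Sum>k=1..<N. V k \<bullet> node N s \<delta> k)"
proof -
  obtain M where M: "N = Suc M" using N by (cases N) auto
  have "node N s \<delta> 0 = 0" "node N s \<delta> N = 0"
    using first last by (simp_all add: node_def M)
  then show ?thesis
    by (simp add: M sum.atLeast0_atMost_Suc sum.atLeast_Suc_atMost atLeastLessThanSuc_atLeastAtMost)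
qed

lemma sum_Ld_differential_eq_nodes:
  fixes Z \<delta> :: "nat \<Rightarrow> nat \<Rightarrow> real^'d" and V :: "nat \<Rightarrow> real^'d"
  assumes L_deriv: "\<And>p. (L has_derivative blinfun_apply (L' p)) (at p)"
    and N: "N \<ge> 1" and s: "s \<ge> 1"
    and transition: "\<And>k. k + 2 \<le> N \<Longrightarrow> \<delta> k s = \<delta> (k + 1) 0"
    and first: "\<delta> 0 0 = 0" and last: "\<delta> (N - 1) s = 0"
    and outer: "\<And>k. k \<in> {1..N - 1} \<Longrightarrow>
        gradarg (Ld L h dp s r b c) s (Z (k - 1)) + gradarg (Ld L h dp s r b c) 0 (Z k) - V k = 0"
    and inner: "\<And>k j. k < N \<Longrightarrow> j \<in> {1..s - 1} \<Longrightarrow> gradarg (Ld L h dp s r b c) j (Z k) = 0"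
  shows "(\<Sum>k<N. Ld_differential L' h dp s r b c (Z k) (\<delta> k)) = (\<Sum>k=0..N. V k \<bullet> node N s \<delta> k)"
proof -
  let ?G = "gradarg (Ld L h dp s r b c)"
  obtain m where m: "s = Suc m" using s by (cases s) auto
  have "Ld_differential L' h dp s r b c (Z k) (\<delta> k) = ?G 0 (Z k) \<bullet> \<delta> k 0 + ?G s (Z k) \<bullet> \<delta> k s"
    if "k < N" for k
  proof -
    have "Ld_differential L' h dp s r b c (Z k) (\<delta> k)
        = ?G 0 (Z k) \<bullet> \<delta> k 0 + (\<Sum>\<nu>=Suc 0..m. ?G \<nu> (Z k) \<bullet> \<delta> k \<nu>) + ?G s (Z k) \<bullet> \<delta> k s"
      unfolding Ld_differential_eq_sum_gradarg[OF L_deriv] m sum.atLeast0_atMost_Suc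
      by (simp add: sum.atLeast_Suc_atMost)
    moreover have "(\<Sum>\<nu>=Suc 0..m. ?G \<nu> (Z k) \<bullet> \<delta> k \<nu>) = 0"
      using inner[OF that] m by simp
    ultimately show ?thesis by simp
  qed
  then have "(\<Sum>k<N. Ld_differential L' h dp s r b c (Z k) (\<delta> k))
      = (\<Sum>k<N. ?G 0 (Z k) \<bullet> \<delta> k 0 + ?G s (Z k) \<bullet> \<delta> k s)"
    by simp
  also have "\<dots> = (\<Sum>k=1..<N. (?G s (Z (k - 1)) + ?G 0 (Z k)) \<bullet> node N s \<delta> k)"
    by (rule sum_boundary_pairing[where \<delta>=\<delta> and s=s, OF N transition first last])
  also have "\<dots> = (\<Sum>k=1..<N. V k \<bullet> node N s \<delta> k)"
  proof (rule sum.cong[OF refl])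
    fix k assume "k \<in> {1..<N}"
    then have "?G s (Z (k - 1)) + ?G 0 (Z k) = V k"
      using outer[of k] by auto
    then show "(?G s (Z (k - 1)) + ?G 0 (Z k)) \<bullet> node N s \<delta> k = V k \<bullet> node N s \<delta> k"
      by simp
  qed
  also have "\<dots> = (\<Sum>k=0..N. V k \<bullet> node N s \<delta> k)"
    by (rule sum_node_interior[OF N first last, symmetric])
  finally show ?thesis .
qed

lemma has_real_derivative_inner_line:
  fixes a a' b b' :: "'a::real_inner"
  shows "((\<lambda>t. (a + t *\<^sub>R a') \<bullet> (b + t *\<^sub>R b')) has_real_derivative a' \<bullet> b + a \<bullet> b') (at 0)"
  unfolding inner_add_left inner_add_right inner_scaleR_left inner_scaleR_right
  by (auto intro!: derivative_eq_intros)

lemma has_real_derivative_action: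
  assumes L_deriv: "\<And>p. (L has_derivative blinfun_apply (L' p)) (at p)"
  shows "((\<lambda>t. action L h dp s r b c \<rho> \<sigma> \<mu> \<alpha> \<beta> N
              (\<lambda>k \<nu>. X k \<nu> + t *\<^sub>R \<delta>X k \<nu>) (\<lambda>k \<nu>. Y k \<nu> + t *\<^sub>R \<delta>Y k \<nu>)) has_real_derivative
    (\<Sum>k<N. Ld_differential L' h dp s r b c (X k) (\<delta>X k) + Ld_differential L' h dp s r b c (Y k) (\<delta>Y k))
    - \<mu> * h * (\<Sum>k=0..N.
        Jminus (omega \<rho> \<sigma> h (- \<alpha>)) (node N s \<delta>X) k \<bullet> Jplus N (omega \<rho> \<sigma> h (- \<beta>)) (node N s Y) k
      + Jminus (omega \<rho> \<sigma> h (- \<alpha>)) (node N s X) k \<bullet> Jplus N (omega \<rho> \<sigma> h (- \<beta>)) (node N s \<delta>Y) k))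
    (at 0)"
  unfolding action_def node_add_scaleR Jminus_add_scaleR Jplus_add_scaleR atLeast0LessThan[symmetric]
  by (intro DERIV_diff DERIV_sum DERIV_add DERIV_cmult has_real_derivative_Ld_line[OF L_deriv]
      has_real_derivative_inner_line)

theorem theorem5p2:
  fixes h \<mu> \<alpha> \<beta> :: real and N s r :: nat
    and L :: "(real^'d) \<times> (real^'d) \<Rightarrow> real"
    and L' :: "(real^'d) \<times> (real^'d) \<Rightarrow> ((real^'d) \<times> (real^'d)) \<Rightarrow>\<^sub>L real"
    and dp b c :: "nat \<Rightarrow> real"
    and \<rho> \<sigma> :: "real poly"
    and X Y :: "nat \<Rightarrow> nat \<Rightarrow> real^'d"
  assumes h: "h > 0" and N: "N \<ge> 1" and s: "s \<ge> 1" and mu: "\<mu> > 0"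
    and alpha: "\<alpha> \<in> {0..1/2}" and beta: "\<beta> \<in> {0..1/2}"
    and L_deriv: "\<And>p. (L has_derivative blinfun_apply (L' p)) (at p)"
    and L'_cont: "continuous_on UNIV L'"
    and dp0: "dp 0 = 0" and dps: "dp s = 1" and dp_mono: "\<And>i. i < s \<Longrightarrow> dp i < dp (Suc i)"
    and c01: "\<And>i. i \<in> {1..r} \<Longrightarrow> c i \<in> {0..1}"
    and sigma0: "coeff \<sigma> 0 \<noteq> 0" and gamma0: "coeff \<rho> 0 / coeff \<sigma> 0 > 0"
    and transX: "\<And>k. k + 2 \<le> N \<Longrightarrow> X k s = X (k + 1) 0"
    and transY: "\<And>k. k + 2 \<le> N \<Longrightarrow> Y k s = Y (k + 1) 0"
    and i: "\<And>k. k \<in> {1..N - 1} \<Longrightarrow>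
        gradarg (Ld L h dp s r b c) s (X (k - 1)) + gradarg (Ld L h dp s r b c) 0 (X k)
        - (\<mu> * h) *\<^sub>R Jminus (omega \<rho> \<sigma> h (- (\<alpha> + \<beta>))) (node N s X) k = 0"
    and ii: "\<And>k j. k < N \<Longrightarrow> j \<in> {1..s - 1} \<Longrightarrow> gradarg (Ld L h dp s r b c) j (X k) = 0"
    and iii: "\<And>k. k \<in> {1..N - 1} \<Longrightarrow>
        gradarg (Ld L h dp s r b c) s (Y (k - 1)) + gradarg (Ld L h dp s r b c) 0 (Y k)
        - (\<mu> * h) *\<^sub>R Jplus N (omega \<rho> \<sigma> h (- (\<alpha> + \<beta>))) (node N s Y) k = 0"
    and iv: "\<And>k j. k < N \<Longrightarrow> j \<in> {1..s - 1} \<Longrightarrow> gradarg (Ld L h dp s r b c) j (Y k) = 0"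
  shows "\<forall>\<delta> :: nat \<Rightarrow> nat \<Rightarrow> real^'d.
           (\<forall>k. k + 2 \<le> N \<longrightarrow> \<delta> k s = \<delta> (k + 1) 0) \<and> \<delta> 0 0 = 0 \<and> \<delta> (N - 1) s = 0 \<longrightarrow>
           ((\<lambda>\<epsilon>. action L h dp s r b c \<rho> \<sigma> \<mu> \<alpha> \<beta> N
                    (\<lambda>k nu. X k nu + \<epsilon> *\<^sub>R \<delta> k nu) (\<lambda>k nu. Y k nu + \<epsilon> *\<^sub>R \<delta> k nu))
             has_real_derivative 0) (at 0)"
proof (intro allI impI)
  fix \<delta> :: "nat \<Rightarrow> nat \<Rightarrow> real^'d"
  assume "(\<forall>k. k + 2 \<le> N \<longrightarrow> \<delta> k s = \<delta> (k + 1) 0) \<and> \<delta> 0 0 = 0 \<and> \<delta> (N - 1) s = 0"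
  then have transition: "\<And>k. k + 2 \<le> N \<Longrightarrow> \<delta> k s = \<delta> (k + 1) 0" and first: "\<delta> 0 0 = 0"
    and last: "\<delta> (N - 1) s = 0" by auto
  let ?w\<alpha>\<beta> = "omega \<rho> \<sigma> h (- (\<alpha> + \<beta>))"
  have "(\<Sum>k<N. Ld_differential L' h dp s r b c (X k) (\<delta> k))
      = (\<Sum>k=0..N. ((\<mu> * h) *\<^sub>R Jminus ?w\<alpha>\<beta> (node N s X) k) \<bullet> node N s \<delta> k)"
    by (rule sum_Ld_differential_eq_nodes[where Z=X and \<delta>=\<delta>])
       (fact L_deriv N s transition first last i ii)+
  moreover have "(\<Sum>k<N. Ld_differential L' h dp s r b c (Y k) (\<delta> k))
      = (\<Sum>k=0..N. ((\<mu> * h) *\<^sub>R Jplus N ?w\<alpha>\<beta> (node N s Y) k) \<bullet> node N s \<delta> k)"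
    by (rule sum_Ld_differential_eq_nodes[where Z=Y and \<delta>=\<delta>])
       (fact L_deriv N s transition first last iii iv)+
  ultimately have conservative: "(\<Sum>k<N. Ld_differential L' h dp s r b c (X k) (\<delta> k)
                                    + Ld_differential L' h dp s r b c (Y k) (\<delta> k))
    = \<mu> * h * (\<Sum>k=0..N. (Jminus ?w\<alpha>\<beta> (node N s X) k + Jplus N ?w\<alpha>\<beta> (node N s Y) k) \<bullet> node N s \<delta> k)"
    by (simp add: sum.distrib sum_distrib_left distrib_left inner_add_left)
  from has_real_derivative_action[OF L_deriv, of h dp s r b c \<rho> \<sigma> \<mu> \<alpha> \<beta> N X \<delta> Y \<delta>]
  show "((\<lambda>\<epsilon>. action L h dp s r b c \<rho> \<sigma> \<mu> \<alpha> \<beta> N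
                    (\<lambda>k nu. X k nu + \<epsilon> *\<^sub>R \<delta> k nu) (\<lambda>k nu. Y k nu + \<epsilon> *\<^sub>R \<delta> k nu))
             has_real_derivative 0) (at 0)"
    unfolding sum_fractional_pairing_variation[OF h sigma0 gamma0] conservative diff_self .
qed

end
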